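(* Let $W\in L^\infty$ and $(X_t)_{t\in\mathbb{T}}\in\mathcal{A}(W)$. Then $(X_t)_{t\in\mathbb{T}}$ is optimal (attains the supremum defining $U(W)$) if and only if the process $(u_t'(\tilde X_t))_{t\in\mathbb{T}}$ is an $(\mathcal{F}_t)$-martingale.
   Context: Let $T\ge 1$ be an integer and $\mathbb{T}=\{1,\dots,T\}$. Let $(\Omega,\mathcal{F},(\mathcal{F}_t)_{t\in\{0,1,\dots,T\}},P)$ be a filtered probability space and $L^{\infty}=L^{\infty}(\Omega,\mathcal{F}_T,P)$. Let $(r_t)_{t\in\mathbb{T}}$ be a bounded, nonnegative, predictable process ($r_t$ is $\mathcal{F}_{t-1}$-measurable), $B_0=1$, $B_t=\prod_{k=1}^t(1+r_k)$, and for a process $(X_t)$ write $\tilde X_t=X_t/B_t$. For $W\in L^\infty$, $\mathcal{A}(W)$ is the set of $(\mathcal{F}_t)$-adapted processes $(Y_t)_{t\in\mathbb{T}}$ with $Y_t\in L^\infty$ for all $t$ and $\sum_{t\in\mathbb{T}}\tilde Y_t=W$ a.s. For each $t\in\mathbb{T}$, $u_t:\mathbb{R}\to\mathbb{R}$ is strictly concave, $C^1$, with $u_t'(x)>0$ for all $x$. Define $U(W)=\sup\{\sum_{t\in\mathbb{T}}E[u_t(\tilde Y_t)]:(Y_t)\in\mathcal{A}(W)\}\in\mathbb{R}\cup\{+\infty\}$. An allocation $(X_t)\in\mathcal{A}(W)$ is optimal if it attains this supremum. *)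

theory Defs
  imports "HOL-Probability.Probability"
begin

definition strict_concave_on :: "real set \<Rightarrow> (real \<Rightarrow> real) \<Rightarrow> bool" where
  "strict_concave_on S f \<longleftrightarrow> convex S \<and>
    (\<forall>x\<in>S. \<forall>y\<in>S. \<forall>a::real. x \<noteq> y \<and> 0 < a \<and> a < 1 \<longrightarrow>
        a * f x + (1 - a) * f y < f (a * x + (1 - a) * y))"

text \<open>Essentially bounded real random variable measurable w.r.t. the sigma-algebra N
  (a representative of an element of L-infinity(Omega, N, P)).\<close>
definition Linf :: "'a measure \<Rightarrow> 'a measure \<Rightarrow> ('a \<Rightarrow> real) \<Rightarrow> bool" where
  "Linf M N X \<longleftrightarrow> X \<in> borel_measurable N \<and> (\<exists>C. AE \<omega> in M. \<bar>X \<omega>\<bar> \<le> C)"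

definition bank :: "(nat \<Rightarrow> 'a \<Rightarrow> real) \<Rightarrow> nat \<Rightarrow> 'a \<Rightarrow> real" where
  "bank r t \<omega> = (\<Prod>k\<in>{1..t}. 1 + r k \<omega>)"

definition allocations ::
  "'a measure \<Rightarrow> (nat \<Rightarrow> 'a measure) \<Rightarrow> nat \<Rightarrow> (nat \<Rightarrow> 'a \<Rightarrow> real) \<Rightarrow> ('a \<Rightarrow> real)
     \<Rightarrow> (nat \<Rightarrow> 'a \<Rightarrow> real) set" where
  "allocations M F T r W = {Y. (\<forall>t\<in>{1..T}. Linf M (F t) (Y t)) \<and>
      (AE \<omega> in M. (\<Sum>t\<in>{1..T}. Y t \<omega> / bank r t \<omega>) = W \<omega>)}"

definition total_utility ::
  "'a measure \<Rightarrow> nat \<Rightarrow> (nat \<Rightarrow> 'a \<Rightarrow> real) \<Rightarrow> (nat \<Rightarrow> real \<Rightarrow> real) \<Rightarrow> (nat \<Rightarrow> 'a \<Rightarrow> real) \<Rightarrow> real" where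
  "total_utility M T r u Y = (\<Sum>t\<in>{1..T}. integral\<^sup>L M (\<lambda>\<omega>. u t (Y t \<omega> / bank r t \<omega>)))"

definition Uval ::
  "'a measure \<Rightarrow> (nat \<Rightarrow> 'a measure) \<Rightarrow> nat \<Rightarrow> (nat \<Rightarrow> 'a \<Rightarrow> real) \<Rightarrow> (nat \<Rightarrow> real \<Rightarrow> real)
     \<Rightarrow> ('a \<Rightarrow> real) \<Rightarrow> ereal" where
  "Uval M F T r u W = (SUP Y\<in>allocations M F T r W. ereal (total_utility M T r u Y))"

definition optimal ::
  "'a measure \<Rightarrow> (nat \<Rightarrow> 'a measure) \<Rightarrow> nat \<Rightarrow> (nat \<Rightarrow> 'a \<Rightarrow> real) \<Rightarrow> (nat \<Rightarrow> real \<Rightarrow> real)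
     \<Rightarrow> ('a \<Rightarrow> real) \<Rightarrow> (nat \<Rightarrow> 'a \<Rightarrow> real) \<Rightarrow> bool" where
  "optimal M F T r u W X \<longleftrightarrow> X \<in> allocations M F T r W \<and>
     ereal (total_utility M T r u X) = Uval M F T r u W"

definition martingale_on ::
  "'a measure \<Rightarrow> (nat \<Rightarrow> 'a measure) \<Rightarrow> nat set \<Rightarrow> (nat \<Rightarrow> 'a \<Rightarrow> real) \<Rightarrow> bool" where
  "martingale_on M F I Z \<longleftrightarrow>
     (\<forall>t\<in>I. Z t \<in> borel_measurable (F t) \<and> integrable M (Z t)) \<and>
     (\<forall>s\<in>I. \<forall>t\<in>I. s \<le> t \<longrightarrow> (AE \<omega> in M. real_cond_exp M (F s) (Z t) \<omega> = Z s \<omega>))"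

end

theory Submission
  imports Defs
begin

text \<open>
  Only concavity (not strict concavity) of the u_t is used, through the tangent
  inequality u(y) <= u(x) + u'(x) (y - x).  Both directions are first-order arguments:

  * Sufficiency: the utility gain of any competitor Y is bounded by
    sum_t E[u'_t(X_t/B_t) D_t], with D_t the difference of the discounted allocations.
    By the martingale property every term equals E[D_t u'_T(X_T/B_T)], and the
    D_t sum to zero almost surely because both allocations have discounted sum W.

  * Necessity: for s < t and an event A in F_s, moving e units of discounted wealth on A
    from time t to time s gives a new allocation.  Its utility gain is at least
    e times phi(e), where phi(e) compares E[1_A u'_s] and E[1_A u'_t] at points shifted
    by e; maximality forces e phi(e) <= 0 for all e, and continuity of phi (dominated
    convergence) yields phi(0) = 0, which is the martingale identity on A.
\<close>

lemma strict_concave_on_imp_concave_on: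
  assumes "strict_concave_on S f"
  shows "concave_on S f"
proof -
  have S: "convex S"
    and strict: "\<And>x y a. x \<in> S \<Longrightarrow> y \<in> S \<Longrightarrow> x \<noteq> y \<Longrightarrow> 0 < a \<Longrightarrow> a < 1 \<Longrightarrow>
                   a * f x + (1 - a) * f y < f (a * x + (1 - a) * y)"
    using assms unfolding strict_concave_on_def by blast+
  show ?thesis
  proof (rule concave_on_linorderI[OF _ S])
    fix t x y :: real
    assume "0 < t" "t < 1" "x \<in> S" "y \<in> S" "x < y"
    then have "(1 - t) * f x + (1 - (1 - t)) * f y < f ((1 - t) * x + (1 - (1 - t)) * y)"
      by (intro strict) auto
    then show "(1 - t) * f x + t * f y \<le> f ((1 - t) *\<^sub>R x + t *\<^sub>R y)"
      by simp
  qed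
qed

lemma concave_on_below_tangent:
  fixes f :: "real \<Rightarrow> real"
  assumes "concave_on UNIV f" and "(f has_real_derivative D) (at x)"
  shows "f y \<le> f x + D * (y - x)"
proof -
  have "convex_on UNIV (\<lambda>x. - f x)"
    using assms(1) by (simp add: concave_on_def)
  then have "(\<lambda>x. - f x) y - (\<lambda>x. - f x) x \<ge> - D * (y - x)"
    by (rule convex_on_imp_above_tangent) (auto intro!: DERIV_minus assms(2))
  then show ?thesis
    by (simp add: algebra_simps)
qed

lemma continuous_bounded_on_interval:
  fixes g :: "real \<Rightarrow> real"
  assumes "continuous_on UNIV g"
  obtains K where "\<And>x. \<bar>x\<bar> \<le> C \<Longrightarrow> \<bar>g x\<bar> \<le> K"
proof -
  have "compact (g ` {-C..C})"
    by (rule compact_continuous_image) (auto intro: continuous_on_subset[OF assms])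
  then have "bounded (g ` {-C..C})"
    by (rule compact_imp_bounded)
  then obtain K where K: "\<forall>y\<in>g ` {-C..C}. norm y \<le> K"
    by (auto simp: bounded_iff)
  show ?thesis
    by (rule that[of K]) (use K in \<open>auto simp: abs_le_iff\<close>)
qed

lemma Linf_const: "Linf M N (\<lambda>_. c)"
  unfolding Linf_def by auto

lemma Linf_indicator: "A \<in> sets N \<Longrightarrow> Linf M N (indicator A)"
  unfolding Linf_def by (auto intro!: exI[of _ 1] simp: indicator_def)

lemma Linf_add:
  assumes "Linf M N a" and "Linf M N b"
  shows "Linf M N (\<lambda>\<omega>. a \<omega> + b \<omega>)"
proof -
  obtain C D where "AE \<omega> in M. \<bar>a \<omega>\<bar> \<le> C" "AE \<omega> in M. \<bar>b \<omega>\<bar> \<le> D"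
    using assms unfolding Linf_def by blast
  then have "AE \<omega> in M. \<bar>a \<omega> + b \<omega>\<bar> \<le> C + D"
    by eventually_elim linarith
  then show ?thesis
    using assms unfolding Linf_def by auto
qed

lemma Linf_diff:
  assumes "Linf M N a" and "Linf M N b"
  shows "Linf M N (\<lambda>\<omega>. a \<omega> - b \<omega>)"
proof -
  obtain C D where "AE \<omega> in M. \<bar>a \<omega>\<bar> \<le> C" "AE \<omega> in M. \<bar>b \<omega>\<bar> \<le> D"
    using assms unfolding Linf_def by blast
  then have "AE \<omega> in M. \<bar>a \<omega> - b \<omega>\<bar> \<le> C + D"
    by eventually_elim linarith
  then show ?thesis
    using assms unfolding Linf_def by auto
qed

lemma Linf_mult:
  assumes "Linf M N a" and "Linf M N b"
  shows "Linf M N (\<lambda>\<omega>. a \<omega> * b \<omega>)"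
proof -
  obtain C D where "AE \<omega> in M. \<bar>a \<omega>\<bar> \<le> C" "AE \<omega> in M. \<bar>b \<omega>\<bar> \<le> D"
    using assms unfolding Linf_def by blast
  then have "AE \<omega> in M. \<bar>a \<omega> * b \<omega>\<bar> \<le> max C 0 * max D 0"
    by eventually_elim (auto simp: abs_mult intro!: mult_mono)
  then show ?thesis
    using assms unfolding Linf_def by auto
qed

lemma Linf_continuous_comp:
  fixes g :: "real \<Rightarrow> real"
  assumes g: "continuous_on UNIV g" and a: "Linf M N a"
  shows "Linf M N (\<lambda>\<omega>. g (a \<omega>))"
proof -
  obtain C where C: "AE \<omega> in M. \<bar>a \<omega>\<bar> \<le> C" and am: "a \<in> borel_measurable N"
    using a unfolding Linf_def by blast
  obtain K where K: "\<And>x. \<bar>x\<bar> \<le> C \<Longrightarrow> \<bar>g x\<bar> \<le> K"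
    using continuous_bounded_on_interval[OF g] by blast
  have "AE \<omega> in M. \<bar>g (a \<omega>)\<bar> \<le> K"
    using C by eventually_elim (rule K)
  moreover have "(\<lambda>\<omega>. g (a \<omega>)) \<in> borel_measurable N"
    using measurable_compose[OF am borel_measurable_continuous_onI[OF g]] .
  ultimately show ?thesis
    unfolding Linf_def by blast
qed

lemma Linf_subalgebra: "subalgebra M N \<Longrightarrow> Linf M N f \<Longrightarrow> Linf M M f"
  unfolding Linf_def by (auto intro: measurable_from_subalg)

lemma (in finite_measure) Linf_integrable:
  assumes "Linf M M f"
  shows "integrable M f"
proof -
  obtain C where "AE \<omega> in M. \<bar>f \<omega>\<bar> \<le> C" and "f \<in> borel_measurable M"
    using assms unfolding Linf_def by blast
  then show ?thesis
    by (intro integrable_const_bound[where B = C]) auto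
qed

lemma (in prob_space) concave_integral_below_tangent:
  fixes f f' :: "real \<Rightarrow> real"
  assumes conc: "concave_on UNIV f" and d: "\<And>x. (f has_real_derivative f' x) (at x)"
    and f'_cont: "continuous_on UNIV f'" and a: "Linf M M a" and b: "Linf M M b"
  shows "(\<integral>\<omega>. f (b \<omega>) \<partial>M) - (\<integral>\<omega>. f (a \<omega>) \<partial>M) \<le> (\<integral>\<omega>. f' (a \<omega>) * (b \<omega> - a \<omega>) \<partial>M)"
proof -
  have f_cont: "continuous_on UNIV f"
    using d by (intro continuous_at_imp_continuous_on) (auto intro: DERIV_isCont)
  have int_fa: "integrable M (\<lambda>\<omega>. f (a \<omega>))" and int_fb: "integrable M (\<lambda>\<omega>. f (b \<omega>))"
    by (intro Linf_integrable Linf_continuous_comp[OF f_cont] a b)+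
  have int_tangent: "integrable M (\<lambda>\<omega>. f' (a \<omega>) * (b \<omega> - a \<omega>))"
    by (intro Linf_integrable Linf_mult Linf_continuous_comp[OF f'_cont] a Linf_diff b)
  have "(\<integral>\<omega>. f (b \<omega>) \<partial>M) - (\<integral>\<omega>. f (a \<omega>) \<partial>M) = (\<integral>\<omega>. f (b \<omega>) - f (a \<omega>) \<partial>M)"
    using int_fa int_fb by simp
  also have "\<dots> \<le> (\<integral>\<omega>. f' (a \<omega>) * (b \<omega> - a \<omega>) \<partial>M)"
  proof (rule integral_mono)
    fix \<omega>
    show "f (b \<omega>) - f (a \<omega>) \<le> f' (a \<omega>) * (b \<omega> - a \<omega>)"
      using concave_on_below_tangent[OF conc d[of "a \<omega>"], of "b \<omega>"] by simp
  qed (use int_fa int_fb int_tangent in simp_all)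
  finally show ?thesis .
qed

text \<open>Lower bound for the expected gain from adding c on the event A; obtained from the
  integrated tangent inequality taken at the perturbed point.\<close>
lemma (in prob_space) concave_perturbation_bound:
  fixes f f' :: "real \<Rightarrow> real"
  assumes conc: "concave_on UNIV f" and d: "\<And>x. (f has_real_derivative f' x) (at x)"
    and f'_cont: "continuous_on UNIV f'" and a: "Linf M M a" and A: "A \<in> sets M"
  shows "c * (\<integral>\<omega>. indicator A \<omega> * f' (a \<omega> + c) \<partial>M)
           \<le> (\<integral>\<omega>. f (a \<omega> + c * indicator A \<omega>) \<partial>M) - (\<integral>\<omega>. f (a \<omega>) \<partial>M)"
proof -
  have a': "Linf M M (\<lambda>\<omega>. a \<omega> + c * indicator A \<omega>)"
    by (intro Linf_add Linf_mult Linf_const Linf_indicator a A)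
  have "(\<integral>\<omega>. f' (a \<omega> + c * indicator A \<omega>) * (a \<omega> - (a \<omega> + c * indicator A \<omega>)) \<partial>M)
      = (\<integral>\<omega>. - c * (indicator A \<omega> * f' (a \<omega> + c)) \<partial>M)"
    by (rule Bochner_Integration.integral_cong) (auto simp: indicator_def)
  also have "\<dots> = - c * (\<integral>\<omega>. indicator A \<omega> * f' (a \<omega> + c) \<partial>M)"
    by simp
  finally show ?thesis
    using concave_integral_below_tangent[OF conc d f'_cont a' a] by simp
qed

lemma (in prob_space) tendsto_integral_indicator_shift:
  fixes g :: "real \<Rightarrow> real"
  assumes g: "continuous_on UNIV g" and a: "Linf M M a" and A: "A \<in> sets M"
    and e: "e \<longlonglongrightarrow> 0" and e_le_1: "\<And>n. \<bar>e n\<bar> \<le> 1"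
  shows "(\<lambda>n. \<integral>\<omega>. indicator A \<omega> * g (a \<omega> + e n) \<partial>M) \<longlonglongrightarrow> (\<integral>\<omega>. indicator A \<omega> * g (a \<omega>) \<partial>M)"
proof -
  obtain C where am: "a \<in> borel_measurable M" and C: "AE \<omega> in M. \<bar>a \<omega>\<bar> \<le> C"
    using a unfolding Linf_def by blast
  obtain K where K: "\<And>x. \<bar>x\<bar> \<le> C + 1 \<Longrightarrow> \<bar>g x\<bar> \<le> K"
    using continuous_bounded_on_interval[OF g] by blast
  have gm: "g \<in> borel_measurable borel"
    using g by (rule borel_measurable_continuous_onI)
  show ?thesis
  proof (rule integral_dominated_convergence[where w = "\<lambda>_. K"])
    show "(\<lambda>\<omega>. indicator A \<omega> * g (a \<omega>)) \<in> borel_measurable M"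
      using measurable_compose[OF am gm] A by measurable
    show "(\<lambda>\<omega>. indicator A \<omega> * g (a \<omega> + e n)) \<in> borel_measurable M" for n
    proof -
      have "(\<lambda>\<omega>. a \<omega> + e n) \<in> borel_measurable M"
        using am by measurable
      from measurable_compose[OF this gm] show ?thesis
        using A by measurable
    qed
    show "AE \<omega> in M. (\<lambda>n. indicator A \<omega> * g (a \<omega> + e n)) \<longlonglongrightarrow> indicator A \<omega> * g (a \<omega>)"
    proof (rule AE_I2)
      fix \<omega>
      have "(\<lambda>n. a \<omega> + e n) \<longlonglongrightarrow> a \<omega> + 0"
        by (intro tendsto_intros e)
      then have "(\<lambda>n. g (a \<omega> + e n)) \<longlonglongrightarrow> g (a \<omega>)"
        using g isCont_tendsto_compose[of "a \<omega>" g] by (simp add: continuous_on_eq_continuous_at)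
      then show "(\<lambda>n. indicator A \<omega> * g (a \<omega> + e n)) \<longlonglongrightarrow> indicator A \<omega> * g (a \<omega>)"
        by (intro tendsto_intros)
    qed
    show "AE \<omega> in M. norm (indicator A \<omega> * g (a \<omega> + e n)) \<le> K" for n
      using C
    proof eventually_elim
      case (elim \<omega>)
      then have "\<bar>g (a \<omega> + e n)\<bar> \<le> K"
        using e_le_1[of n] by (intro K) linarith
      then show ?case
        by (auto simp: indicator_def)
    qed
  qed simp
qed

lemma sign_condition_imp_zero:
  fixes \<phi> :: "real \<Rightarrow> real"
  assumes sign: "\<And>e. e * \<phi> e \<le> 0"
    and right: "(\<lambda>n. \<phi> (inverse (real (Suc n)))) \<longlonglongrightarrow> \<phi> 0"
    and left: "(\<lambda>n. \<phi> (- inverse (real (Suc n)))) \<longlonglongrightarrow> \<phi> 0"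
  shows "\<phi> 0 = 0"
proof (rule antisym)
  have "\<phi> (inverse (real (Suc n))) \<le> 0" for n
    using sign[of "inverse (real (Suc n))"] by (simp add: mult_le_0_iff)
  then show "\<phi> 0 \<le> 0"
    by (intro LIMSEQ_le_const2[OF right]) auto
  have "0 \<le> \<phi> (- inverse (real (Suc n)))" for n
    using sign[of "- inverse (real (Suc n))"] by (simp add: zero_le_mult_iff)
  then show "0 \<le> \<phi> 0"
    by (intro LIMSEQ_le_const[OF left]) auto
qed

lemma optimal_iff_maximal:
  "optimal M F T r u W X \<longleftrightarrow> X \<in> allocations M F T r W \<and>
     (\<forall>Y\<in>allocations M F T r W. total_utility M T r u Y \<le> total_utility M T r u X)"
proof (cases "X \<in> allocations M F T r W")
  case True
  then have "ereal (total_utility M T r u X) \<le> Uval M F T r u W"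
    unfolding Uval_def by (rule SUP_upper)
  moreover have "Uval M F T r u W \<le> ereal (total_utility M T r u X) \<longleftrightarrow>
      (\<forall>Y\<in>allocations M F T r W. total_utility M T r u Y \<le> total_utility M T r u X)"
    unfolding Uval_def by (simp add: SUP_le_iff)
  ultimately show ?thesis
    unfolding optimal_def by auto
qed (simp add: optimal_def)

locale discounted_utility_model = prob_space M
  for M :: "'a measure" +
  fixes F :: "nat \<Rightarrow> 'a measure" and T :: nat and r :: "nat \<Rightarrow> 'a \<Rightarrow> real"
    and u u' :: "nat \<Rightarrow> real \<Rightarrow> real"
  assumes filt_sub: "\<And>t. t \<le> T \<Longrightarrow> subalgebra M (F t)"
    and filt_mono: "\<And>s t. s \<le> t \<Longrightarrow> t \<le> T \<Longrightarrow> sets (F s) \<subseteq> sets (F t)"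
    and r_pred: "\<And>t. t \<in> {1..T} \<Longrightarrow> r t \<in> borel_measurable (F (t - 1))"
    and r_nonneg: "\<And>t \<omega>. t \<in> {1..T} \<Longrightarrow> \<omega> \<in> space M \<Longrightarrow> 0 \<le> r t \<omega>"
    and r_bdd: "\<exists>C. \<forall>t\<in>{1..T}. \<forall>\<omega>\<in>space M. r t \<omega> \<le> C"
    and u_conc: "\<And>t. t \<in> {1..T} \<Longrightarrow> concave_on UNIV (u t)"
    and u_deriv: "\<And>t x. t \<in> {1..T} \<Longrightarrow> (u t has_real_derivative u' t x) (at x)"
    and u'_cont: "\<And>t. t \<in> {1..T} \<Longrightarrow> continuous_on UNIV (u' t)"
begin

abbreviation marginal_utility :: "(nat \<Rightarrow> 'a \<Rightarrow> real) \<Rightarrow> nat \<Rightarrow> 'a \<Rightarrow> real" where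
  "marginal_utility X t \<omega> \<equiv> u' t (X t \<omega> / bank r t \<omega>)"

lemma filtration_space: "t \<le> T \<Longrightarrow> space (F t) = space M"
  using filt_sub unfolding subalgebra_def by simp

lemma filtration_sets: "t \<le> T \<Longrightarrow> A \<in> sets (F t) \<Longrightarrow> A \<in> sets M"
  using filt_sub unfolding subalgebra_def by auto

lemma filtration_measurable_mono:
  assumes "s \<le> t" "t \<le> T" "f \<in> borel_measurable (F s)"
  shows "f \<in> borel_measurable (F t)"
proof (rule measurable_from_subalg[OF _ assms(3)])
  show "subalgebra (F t) (F s)"
    unfolding subalgebra_def
    using filtration_space[of s] filtration_space[of t] filt_mono[OF assms(1,2)] assms by auto
qed

lemma filtration_sigma_finite: "t \<le> T \<Longrightarrow> sigma_finite_subalgebra M (F t)"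
  by (intro finite_measure_subalgebra_is_sigma_finite finite_measure_subalgebra.intro
      finite_measure_subalgebra_axioms.intro filt_sub finite_measure_axioms)

lemma Linf_filtration: "t \<le> T \<Longrightarrow> Linf M (F t) f \<Longrightarrow> Linf M M f"
  by (rule Linf_subalgebra[OF filt_sub])

lemma bank_ge_1: "t \<in> {1..T} \<Longrightarrow> \<omega> \<in> space M \<Longrightarrow> 1 \<le> bank r t \<omega>"
  unfolding bank_def by (rule prod_ge_1) (use r_nonneg in auto)

lemma bank_Linf:
  assumes t: "t \<in> {1..T}"
  shows "Linf M (F t) (bank r t)"
proof -
  obtain C where C: "\<And>k \<omega>. k \<in> {1..T} \<Longrightarrow> \<omega> \<in> space M \<Longrightarrow> r k \<omega> \<le> C"
    using r_bdd by blast
  have "(\<lambda>\<omega>. \<Prod>k\<in>{1..t}. 1 + r k \<omega>) \<in> borel_measurable (F t)"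
  proof (rule borel_measurable_prod)
    fix k assume k: "k \<in> {1..t}"
    have "r k \<in> borel_measurable (F t)"
      by (rule filtration_measurable_mono[OF _ _ r_pred]) (use k t in auto)
    then show "(\<lambda>\<omega>. 1 + r k \<omega>) \<in> borel_measurable (F t)"
      by measurable
  qed
  then have "bank r t \<in> borel_measurable (F t)"
    by (simp add: bank_def[abs_def])
  moreover have "\<bar>bank r t \<omega>\<bar> \<le> (1 + C) ^ t" if "\<omega> \<in> space M" for \<omega>
  proof -
    have "bank r t \<omega> \<le> (\<Prod>k\<in>{1..t}. 1 + C)"
      unfolding bank_def by (rule prod_mono) (use r_nonneg C t that in auto)
    then show ?thesis
      using bank_ge_1[OF t that] by simp
  qed
  ultimately show ?thesis
    unfolding Linf_def by (blast intro: AE_I2)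
qed

lemma discounted_Linf:
  assumes t: "t \<in> {1..T}" and y: "Linf M (F t) y"
  shows "Linf M (F t) (\<lambda>\<omega>. y \<omega> / bank r t \<omega>)"
proof -
  obtain C where C: "AE \<omega> in M. \<bar>y \<omega>\<bar> \<le> C"
    using y unfolding Linf_def by blast
  have "AE \<omega> in M. \<bar>y \<omega> / bank r t \<omega>\<bar> \<le> C"
    using C AE_space
  proof eventually_elim
    case (elim \<omega>)
    have "1 \<le> bank r t \<omega>"
      using bank_ge_1[OF t elim(2)] .
    then have "\<bar>y \<omega> / bank r t \<omega>\<bar> \<le> \<bar>y \<omega>\<bar>"
      by (simp add: abs_div divide_le_eq mult_le_cancel_left1)
    then show ?case
      using elim(1) by linarith
  qed
  moreover have "(\<lambda>\<omega>. y \<omega> / bank r t \<omega>) \<in> borel_measurable (F t)"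
    using y bank_Linf[OF t] unfolding Linf_def by (auto intro!: borel_measurable_divide)
  ultimately show ?thesis
    unfolding Linf_def by blast
qed

lemma allocation_Linf: "Y \<in> allocations M F T r W \<Longrightarrow> t \<in> {1..T} \<Longrightarrow> Linf M (F t) (Y t)"
  unfolding allocations_def by auto

lemma allocation_budget:
  "Y \<in> allocations M F T r W \<Longrightarrow> AE \<omega> in M. (\<Sum>t\<in>{1..T}. Y t \<omega> / bank r t \<omega>) = W \<omega>"
  unfolding allocations_def by auto

lemma allocation_discounted_Linf:
  assumes "Y \<in> allocations M F T r W" and t: "t \<in> {1..T}"
  shows "Linf M M (\<lambda>\<omega>. Y t \<omega> / bank r t \<omega>)"
  using t Linf_filtration[OF _ discounted_Linf[OF t allocation_Linf[OF assms]]] by simp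

lemma marginal_utility_Linf:
  assumes "Y \<in> allocations M F T r W" and t: "t \<in> {1..T}"
  shows "Linf M (F t) (marginal_utility Y t)"
  using Linf_continuous_comp[OF u'_cont[OF t] discounted_Linf[OF t allocation_Linf[OF assms]]] .

text \<open>Tower property: pairing an F_t-measurable D with Z_t or with the terminal value Z_T
  gives the same expectation.\<close>
lemma martingale_terminal_pairing:
  assumes Z: "martingale_on M F {1..T} Z" and t: "t \<in> {1..T}"
    and D: "D \<in> borel_measurable (F t)" and DZ: "integrable M (\<lambda>\<omega>. D \<omega> * Z T \<omega>)"
  shows "(\<integral>\<omega>. Z t \<omega> * D \<omega> \<partial>M) = (\<integral>\<omega>. D \<omega> * Z T \<omega> \<partial>M)"
proof -
  interpret Ft: sigma_finite_subalgebra M "F t"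
    using t by (intro filtration_sigma_finite) simp
  have T: "T \<in> {1..T}"
    using t by simp
  have cond: "AE \<omega> in M. real_cond_exp M (F t) (Z T) \<omega> = Z t \<omega>"
    using Z t T unfolding martingale_on_def by auto
  have ZT: "Z T \<in> borel_measurable M" and Zt: "Z t \<in> borel_measurable M"
    using Z t T unfolding martingale_on_def by (auto intro: measurable_from_subalg[OF filt_sub])
  have "D \<in> borel_measurable M"
    using D t by (intro measurable_from_subalg[OF filt_sub]) auto
  then have "(\<integral>\<omega>. Z t \<omega> * D \<omega> \<partial>M) = (\<integral>\<omega>. D \<omega> * real_cond_exp M (F t) (Z T) \<omega> \<partial>M)"
    using cond Zt by (intro integral_cong_AE) (auto simp: mult.commute)
  also have "\<dots> = (\<integral>\<omega>. D \<omega> * Z T \<omega> \<partial>M)"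
    by (rule Ft.real_cond_exp_intg(2)[OF DZ D ZT])
  finally show ?thesis .
qed

lemma martingale_imp_maximal:
  assumes X: "X \<in> allocations M F T r W" and Y: "Y \<in> allocations M F T r W"
    and mart: "martingale_on M F {1..T} (marginal_utility X)"
  shows "total_utility M T r u Y \<le> total_utility M T r u X"
proof -
  define D where "D t \<omega> = Y t \<omega> / bank r t \<omega> - X t \<omega> / bank r t \<omega>" for t \<omega>
  have D_Linf: "Linf M (F t) (D t)" if "t \<in> {1..T}" for t
    unfolding D_def
    using Linf_diff[OF discounted_Linf[OF that allocation_Linf[OF Y that]]
        discounted_Linf[OF that allocation_Linf[OF X that]]] .
  have DZ_int: "integrable M (\<lambda>\<omega>. D t \<omega> * marginal_utility X T \<omega>)" if t: "t \<in> {1..T}" for t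
  proof -
    have "T \<in> {1..T}"
      using t by simp
    then have "Linf M M (D t)" and "Linf M M (marginal_utility X T)"
      using t Linf_filtration[OF _ D_Linf[OF t]]
        Linf_filtration[OF _ marginal_utility_Linf[OF X \<open>T \<in> {1..T}\<close>]] by auto
    then show ?thesis
      by (intro Linf_integrable Linf_mult)
  qed
  have gain: "(\<integral>\<omega>. u t (Y t \<omega> / bank r t \<omega>) \<partial>M) - (\<integral>\<omega>. u t (X t \<omega> / bank r t \<omega>) \<partial>M)
      \<le> (\<integral>\<omega>. marginal_utility X t \<omega> * D t \<omega> \<partial>M)" if t: "t \<in> {1..T}" for t
    unfolding D_def
    using concave_integral_below_tangent[OF u_conc[OF t] u_deriv[OF t] u'_cont[OF t]
        allocation_discounted_Linf[OF X t] allocation_discounted_Linf[OF Y t]] .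
  have budget: "AE \<omega> in M. (\<Sum>t\<in>{1..T}. D t \<omega>) = 0"
    using allocation_budget[OF X] allocation_budget[OF Y]
    by eventually_elim (simp add: D_def sum_subtractf)
  have "total_utility M T r u Y - total_utility M T r u X
      = (\<Sum>t\<in>{1..T}. (\<integral>\<omega>. u t (Y t \<omega> / bank r t \<omega>) \<partial>M) - (\<integral>\<omega>. u t (X t \<omega> / bank r t \<omega>) \<partial>M))"
    unfolding total_utility_def by (simp add: sum_subtractf)
  also have "\<dots> \<le> (\<Sum>t\<in>{1..T}. \<integral>\<omega>. marginal_utility X t \<omega> * D t \<omega> \<partial>M)"
    by (rule sum_mono) (rule gain)
  also have "\<dots> = (\<Sum>t\<in>{1..T}. \<integral>\<omega>. D t \<omega> * marginal_utility X T \<omega> \<partial>M)"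
  proof (rule sum.cong[OF refl])
    fix t assume t: "t \<in> {1..T}"
    have "D t \<in> borel_measurable (F t)"
      using D_Linf[OF t] unfolding Linf_def by blast
    then show "(\<integral>\<omega>. marginal_utility X t \<omega> * D t \<omega> \<partial>M) = (\<integral>\<omega>. D t \<omega> * marginal_utility X T \<omega> \<partial>M)"
      by (rule martingale_terminal_pairing[OF mart t _ DZ_int[OF t]])
  qed
  also have "\<dots> = (\<integral>\<omega>. (\<Sum>t\<in>{1..T}. D t \<omega>) * marginal_utility X T \<omega> \<partial>M)"
    using DZ_int by (simp add: sum_distrib_right)
  also have "\<dots> = 0"
    using budget by (intro integral_eq_zero_AE) (simp add: eventually_mono)
  finally show ?thesis
    by simp
qed

text \<open>The allocation obtained from X by moving e units of discounted wealth, on the event A,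
  from time t to time s.\<close>
definition transfer :: "(nat \<Rightarrow> 'a \<Rightarrow> real) \<Rightarrow> nat \<Rightarrow> nat \<Rightarrow> 'a set \<Rightarrow> real \<Rightarrow> nat \<Rightarrow> 'a \<Rightarrow> real"
  where "transfer X s t A e = X(s := (\<lambda>\<omega>. X s \<omega> + e * indicator A \<omega> * bank r s \<omega>),
                                t := (\<lambda>\<omega>. X t \<omega> - e * indicator A \<omega> * bank r t \<omega>))"

lemma transfer_discounted:
  assumes "s \<noteq> t" and k: "k \<in> {1..T}" and \<omega>: "\<omega> \<in> space M"
  shows "transfer X s t A e k \<omega> / bank r k \<omega> = X k \<omega> / bank r k \<omega>
           + (if k = s then e * indicator A \<omega> else 0) - (if k = t then e * indicator A \<omega> else 0)"
proof -
  have "bank r k \<omega> \<noteq> 0"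
    using bank_ge_1[OF k \<omega>] by linarith
  then show ?thesis
    using assms(1) by (auto simp: transfer_def add_divide_distrib diff_divide_distrib)
qed

text \<open>For s < t and A in F_s, a transfer is again an allocation: it stays adapted because
  A is already known at time s, and the discounted budget is unchanged.\<close>
lemma transfer_allocation:
  assumes X: "X \<in> allocations M F T r W" and s: "s \<in> {1..T}" and t: "t \<in> {1..T}"
    and st: "s < t" and A: "A \<in> sets (F s)"
  shows "transfer X s t A e \<in> allocations M F T r W"
proof -
  have shifted: "Linf M (F k) (\<lambda>\<omega>. X k \<omega> + c * indicator A \<omega> * bank r k \<omega>)"
    if k: "k \<in> {1..T}" and "s \<le> k" for k c
  proof -
    have "A \<in> sets (F k)"
      using filt_mono[of s k] that A by auto
    then show ?thesis
      using Linf_add[OF allocation_Linf[OF X k] Linf_mult[OF Linf_mult[OF Linf_const Linf_indicator]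
            bank_Linf[OF k]]] by blast
  qed
  have "Linf M (F k) (transfer X s t A e k)" if k: "k \<in> {1..T}" for k
    using shifted[OF s, of e] shifted[OF t, of "- e"] allocation_Linf[OF X k] st
    by (auto simp: transfer_def)
  moreover have "AE \<omega> in M. (\<Sum>k\<in>{1..T}. transfer X s t A e k \<omega> / bank r k \<omega>) = W \<omega>"
    using allocation_budget[OF X] AE_space
  proof eventually_elim
    case (elim \<omega>)
    have "(\<Sum>k\<in>{1..T}. transfer X s t A e k \<omega> / bank r k \<omega>) = (\<Sum>k\<in>{1..T}. X k \<omega> / bank r k \<omega>
        + (if k = s then e * indicator A \<omega> else 0) - (if k = t then e * indicator A \<omega> else 0))"
      using st elim(2) by (intro sum.cong refl transfer_discounted) auto
    also have "\<dots> = (\<Sum>k\<in>{1..T}. X k \<omega> / bank r k \<omega>)"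
      using s t by (simp add: sum.distrib sum_subtractf)
    finally show ?case
      using elim(1) by simp
  qed
  ultimately show ?thesis
    unfolding allocations_def by blast
qed

lemma transfer_utility_gain:
  assumes X: "X \<in> allocations M F T r W" and s: "s \<in> {1..T}" and t: "t \<in> {1..T}"
    and st: "s \<noteq> t" and A: "A \<in> sets M"
  shows "e * ((\<integral>\<omega>. indicator A \<omega> * u' s (X s \<omega> / bank r s \<omega> + e) \<partial>M)
               - (\<integral>\<omega>. indicator A \<omega> * u' t (X t \<omega> / bank r t \<omega> - e) \<partial>M))
         \<le> total_utility M T r u (transfer X s t A e) - total_utility M T r u X"
proof -
  define gain where "gain k = (\<integral>\<omega>. u k (transfer X s t A e k \<omega> / bank r k \<omega>) \<partial>M)
      - (\<integral>\<omega>. u k (X k \<omega> / bank r k \<omega>) \<partial>M)" for k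
  have gain_s: "gain s = (\<integral>\<omega>. u s (X s \<omega> / bank r s \<omega> + e * indicator A \<omega>) \<partial>M)
      - (\<integral>\<omega>. u s (X s \<omega> / bank r s \<omega>) \<partial>M)"
    unfolding gain_def using transfer_discounted[OF st s] st
    by (simp cong: Bochner_Integration.integral_cong)
  have gain_t: "gain t = (\<integral>\<omega>. u t (X t \<omega> / bank r t \<omega> + - e * indicator A \<omega>) \<partial>M)
      - (\<integral>\<omega>. u t (X t \<omega> / bank r t \<omega>) \<partial>M)"
    unfolding gain_def using transfer_discounted[OF st t] st
    by (simp cong: Bochner_Integration.integral_cong)
  have "total_utility M T r u (transfer X s t A e) - total_utility M T r u X = (\<Sum>k\<in>{1..T}. gain k)"
    unfolding total_utility_def gain_def by (simp add: sum_subtractf)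
  also have "\<dots> = (\<Sum>k\<in>{s, t}. gain k)"
    using s t by (intro sum.mono_neutral_right) (auto simp: gain_def transfer_def)
  also have "\<dots> = gain s + gain t"
    using st by simp
  finally have total: "total_utility M T r u (transfer X s t A e) - total_utility M T r u X = gain s + gain t" .
  have "e * (\<integral>\<omega>. indicator A \<omega> * u' s (X s \<omega> / bank r s \<omega> + e) \<partial>M) \<le> gain s"
    unfolding gain_s
    by (rule concave_perturbation_bound[OF u_conc[OF s] u_deriv[OF s] u'_cont[OF s]
          allocation_discounted_Linf[OF X s] A])
  moreover have "- e * (\<integral>\<omega>. indicator A \<omega> * u' t (X t \<omega> / bank r t \<omega> + - e) \<partial>M) \<le> gain t"
    unfolding gain_t
    by (rule concave_perturbation_bound[OF u_conc[OF t] u_deriv[OF t] u'_cont[OF t]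
          allocation_discounted_Linf[OF X t] A])
  ultimately show ?thesis
    unfolding total by (simp add: right_diff_distrib)
qed

lemma maximal_imp_equal_set_integrals:
  assumes X: "X \<in> allocations M F T r W"
    and max: "\<And>Y. Y \<in> allocations M F T r W \<Longrightarrow> total_utility M T r u Y \<le> total_utility M T r u X"
    and s: "s \<in> {1..T}" and t: "t \<in> {1..T}" and st: "s < t" and A: "A \<in> sets (F s)"
  shows "(\<integral>\<omega>. indicator A \<omega> * marginal_utility X s \<omega> \<partial>M)
           = (\<integral>\<omega>. indicator A \<omega> * marginal_utility X t \<omega> \<partial>M)"
proof -
  have A_M: "A \<in> sets M"
    using filtration_sets s A by auto
  define \<phi> where "\<phi> e = (\<integral>\<omega>. indicator A \<omega> * u' s (X s \<omega> / bank r s \<omega> + e) \<partial>M)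
      - (\<integral>\<omega>. indicator A \<omega> * u' t (X t \<omega> / bank r t \<omega> - e) \<partial>M)" for e
  have sign: "e * \<phi> e \<le> 0" for e
    using transfer_utility_gain[OF X s t _ A_M, of e] max[OF transfer_allocation[OF X s t st A, of e]] st
    unfolding \<phi>_def by linarith
  have continuity: "(\<lambda>n. \<phi> (e n)) \<longlonglongrightarrow> \<phi> 0" if e: "e \<longlonglongrightarrow> 0" "\<And>n. \<bar>e n\<bar> \<le> 1" for e
  proof -
    have "(\<lambda>n. - e n) \<longlonglongrightarrow> 0" and "\<And>n. \<bar>- e n\<bar> \<le> 1"
      using tendsto_minus[OF e(1)] e(2) by auto
    from tendsto_diff[OF
        tendsto_integral_indicator_shift[OF u'_cont[OF s] allocation_discounted_Linf[OF X s] A_M e]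
        tendsto_integral_indicator_shift[OF u'_cont[OF t] allocation_discounted_Linf[OF X t] A_M this]]
    show ?thesis
      unfolding \<phi>_def by simp
  qed
  have "\<phi> 0 = 0"
    using LIMSEQ_inverse_real_of_nat tendsto_minus[OF LIMSEQ_inverse_real_of_nat]
    by (intro sign_condition_imp_zero sign continuity) (auto simp: inverse_le_1_iff)
  then show ?thesis
    unfolding \<phi>_def by simp
qed

lemma maximal_imp_martingale:
  assumes X: "X \<in> allocations M F T r W"
    and max: "\<And>Y. Y \<in> allocations M F T r W \<Longrightarrow> total_utility M T r u Y \<le> total_utility M T r u X"
  shows "martingale_on M F {1..T} (marginal_utility X)"
  unfolding martingale_on_def
proof (intro conjI ballI impI)
  fix t assume t: "t \<in> {1..T}"
  show "marginal_utility X t \<in> borel_measurable (F t)"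
    using marginal_utility_Linf[OF X t] unfolding Linf_def by blast
  show "integrable M (marginal_utility X t)"
    using t Linf_integrable[OF Linf_filtration[OF _ marginal_utility_Linf[OF X t]]] by simp
next
  fix s t assume s: "s \<in> {1..T}" and t: "t \<in> {1..T}" and "s \<le> t"
  interpret Fs: sigma_finite_subalgebra M "F s"
    using s by (intro filtration_sigma_finite) simp
  have Z: "marginal_utility X k \<in> borel_measurable (F k)" "integrable M (marginal_utility X k)"
    if "k \<in> {1..T}" for k
    using that marginal_utility_Linf[OF X that] Linf_integrable[OF Linf_filtration[OF _ marginal_utility_Linf[OF X that]]]
    unfolding Linf_def by auto
  show "AE \<omega> in M. real_cond_exp M (F s) (marginal_utility X t) \<omega> = marginal_utility X s \<omega>"
  proof (rule Fs.real_cond_exp_charact)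
    fix A assume A: "A \<in> sets (F s)"
    show "(\<integral>\<omega>\<in>A. marginal_utility X t \<omega> \<partial>M) = (\<integral>\<omega>\<in>A. marginal_utility X s \<omega> \<partial>M)"
    proof (cases "s = t")
      case False
      with \<open>s \<le> t\<close> have "s < t" by simp
      then show ?thesis
        unfolding set_lebesgue_integral_def
        using maximal_imp_equal_set_integrals[OF X max s t _ A] by simp
    qed simp
  qed (use Z s t in auto)
qed

end

theorem theorem2p8:
  fixes M :: "'a measure" and F :: "nat \<Rightarrow> 'a measure" and T :: nat
    and r :: "nat \<Rightarrow> 'a \<Rightarrow> real"
    and u u' :: "nat \<Rightarrow> real \<Rightarrow> real"
    and W :: "'a \<Rightarrow> real" and X :: "nat \<Rightarrow> 'a \<Rightarrow> real"
  assumes P: "prob_space M"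
    and T: "T \<ge> 1"
    and filt_sub: "\<And>t. t \<le> T \<Longrightarrow> subalgebra M (F t)"
    and filt_mono: "\<And>s t. s \<le> t \<Longrightarrow> t \<le> T \<Longrightarrow> sets (F s) \<subseteq> sets (F t)"
    and r_pred: "\<And>t. t \<in> {1..T} \<Longrightarrow> r t \<in> borel_measurable (F (t - 1))"
    and r_nonneg: "\<And>t \<omega>. t \<in> {1..T} \<Longrightarrow> \<omega> \<in> space M \<Longrightarrow> 0 \<le> r t \<omega>"
    and r_bdd: "\<exists>C. \<forall>t\<in>{1..T}. \<forall>\<omega>\<in>space M. r t \<omega> \<le> C"
    and u_conc: "\<And>t. t \<in> {1..T} \<Longrightarrow> strict_concave_on UNIV (u t)"
    and u_deriv: "\<And>t x. t \<in> {1..T} \<Longrightarrow> (u t has_real_derivative u' t x) (at x)"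
    and u'_cont: "\<And>t. t \<in> {1..T} \<Longrightarrow> continuous_on UNIV (u' t)"
    and u'_pos: "\<And>t x. t \<in> {1..T} \<Longrightarrow> u' t x > 0"
    and W: "Linf M (F T) W"
    and X: "X \<in> allocations M F T r W"
  shows "optimal M F T r u W X \<longleftrightarrow>
           martingale_on M F {1..T} (\<lambda>t \<omega>. u' t (X t \<omega> / bank r t \<omega>))"
proof -
  interpret discounted_utility_model M F T r u u'
  proof (intro discounted_utility_model.intro discounted_utility_model_axioms.intro P)
    show "concave_on UNIV (u t)" if "t \<in> {1..T}" for t
      using strict_concave_on_imp_concave_on[OF u_conc[OF that]] .
  qed (use filt_sub filt_mono r_pred r_nonneg r_bdd u_deriv u'_cont in auto)
  show ?thesis
    unfolding optimal_iff_maximal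
    using X martingale_imp_maximal[OF X] maximal_imp_martingale[OF X] by blast
qed

end
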